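(* Let $f:\mathbb{R}^d\to\mathbb{R}$ be $\mu$-strongly convex, $L$-smooth (i.e. $\mu I\preceq\nabla^2 f(x)\preceq LI$ for all $x$) and $M$-strongly self-concordant. Let $1\le k<d$, let $x,x_+\in\mathbb{R}^d$, and let $B$ be a symmetric matrix with $B\succeq\nabla^2 f(x)$. Let $r:=\|x_+-x\|_{\nabla^2 f(x)}$, $P:=\big(1+\frac{Mr}{2}\big)^2B$ and $$B_+:=\mathrm{SR}\text{-}k\big(P,\nabla^2 f(x_+),E_k(P-\nabla^2 f(x_+))\big).$$ Then $B_+\succeq\nabla^2 f(x_+)$ and $$\frac{\mathrm{tr}(B_+-\nabla^2 f(x_+))}{\mathrm{tr}(\nabla^2 f(x_+))}\le\Big(1-\frac kd\Big)\Big(1+\frac{Mr}{2}\Big)^4\Big(\frac{\mathrm{tr}(B-\nabla^2 f(x))}{\mathrm{tr}(\nabla^2 f(x))}+2Mr\Big).$$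
   Context: $f$ is $M$-strongly self-concordant if $\nabla^2 f(y)-\nabla^2 f(x)\preceq M\|y-x\|_{\nabla^2 f(z)}\nabla^2 f(w)$ for all $x,y,z,w\in\mathbb{R}^d$, where $\|u\|_A=\sqrt{u^\top A u}$. For a symmetric matrix $C\in\mathbb{R}^{d\times d}$ and $1\le k<d$, $E_k(C)=[e_{i_1},\dots,e_{i_k}]\in\mathbb{R}^{d\times k}$, where $e_j$ is the $j$-th standard basis vector and $i_1,\dots,i_k$ are the indices of the $k$ largest diagonal entries of $C$. For symmetric positive definite $G\succeq A$ and full-rank $U\in\mathbb{R}^{d\times k}$: $\mathrm{SR}\text{-}k(G,A,U)=G$ if $GU=AU$, and otherwise $\mathrm{SR}\text{-}k(G,A,U)=G-(G-A)U\big(U^\top(G-A)U\big)^{\dagger}U^\top(G-A)$, where $\dagger$ is the Moore–Penrose pseudoinverse. *)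

theory Defs
  imports "HOL-Analysis.Analysis"
begin

definition loewner_le :: "real^'n^'n \<Rightarrow> real^'n^'n \<Rightarrow> bool" where
  "loewner_le A B \<longleftrightarrow> (\<forall>v::real^'n. 0 \<le> v \<bullet> ((B - A) *v v))"

definition symmetric_mat :: "real^'n^'n \<Rightarrow> bool" where
  "symmetric_mat A \<longleftrightarrow> transpose A = A"

definition mnorm :: "real^'n \<Rightarrow> real^'n^'n \<Rightarrow> real" where
  "mnorm u A = sqrt (u \<bullet> (A *v u))"

definition pinv :: "real^'m^'n \<Rightarrow> real^'n^'m" where
  "pinv A = (THE X. A ** X ** A = A \<and> X ** A ** X = X \<and>
       transpose (A ** X) = A ** X \<and> transpose (X ** A) = X ** A)"

definition sr_k :: "real^'n^'n \<Rightarrow> real^'n^'n \<Rightarrow> real^'k^'n \<Rightarrow> real^'n^'n" where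
  "sr_k G A U = (if G ** U = A ** U then G
     else G - (G - A) ** U ** pinv (transpose U ** (G - A) ** U) ** transpose U ** (G - A))"

text \<open>U is a valid E_k(C): U = [e_{i_1},...,e_{i_k}] where i_1..i_k (distinct) are indices of the
  k = CARD('k) largest diagonal entries of C (any tie-breaking, any column order).\<close>
definition is_Ek :: "real^'n^'n \<Rightarrow> real^'k^'n \<Rightarrow> bool" where
  "is_Ek C U \<longleftrightarrow> (\<exists>idx :: 'k \<Rightarrow> 'n. inj idx \<and>
      (\<forall>i\<in>range idx. \<forall>j. j \<notin> range idx \<longrightarrow> C$j$j \<le> C$i$i) \<and>
      U = (\<chi> j l. if j = idx l then 1 else 0))"

definition strongly_self_concordant :: "real \<Rightarrow> (real^'n \<Rightarrow> real^'n^'n) \<Rightarrow> bool" where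
  "strongly_self_concordant M H \<longleftrightarrow> (\<forall>x y z w.
      loewner_le (H y - H x) ((M * mnorm (y - x) (H z)) *\<^sub>R H w))"

end

theory Submission
  imports Defs
begin

text \<open>Strong self-concordance gives \<open>\<nabla>\<^sup>2f(x\<^sub>+) \<preceq> (1 + Mr) \<nabla>\<^sup>2f(x) \<preceq> (1 + Mr/2)\<^sup>2 B = P\<close>,
  so \<open>R = P - \<nabla>\<^sup>2f(x\<^sub>+)\<close> is positive semidefinite.  The SR-k update subtracts from \<open>P\<close> the
  correction \<open>R U (U\<^sup>T R U)\<^sup>\<dagger> U\<^sup>T R\<close>, which is dominated by \<open>R\<close> (a Schur complement argument)
  and agrees with \<open>R\<close> on the diagonal entries selected by \<open>U\<close>.  Hence \<open>B\<^sub>+ \<succeq> \<nabla>\<^sup>2f(x\<^sub>+)\<close>, and the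
  trace of \<open>B\<^sub>+ - \<nabla>\<^sup>2f(x\<^sub>+)\<close> is at most the sum of the \<open>d - k\<close> smallest diagonal entries
  of \<open>R\<close>, i.e. at most \<open>(1 - k/d) tr R\<close>.  The remaining estimate of \<open>tr R / tr \<nabla>\<^sup>2f(x\<^sub>+)\<close>
  uses \<open>tr \<nabla>\<^sup>2f(x) \<le> (1 + Mr) tr \<nabla>\<^sup>2f(x\<^sub>+)\<close> and the scalar inequality
  \<open>(1 + s/2)\<^sup>4 (1 - 2s) \<le> 1\<close> for \<open>s > -1\<close>.\<close>

lemma matrix_diff_ldistrib: "(A::real^'n^'m) ** (B - C) = A ** B - A ** C"
  by (simp add: matrix_matrix_mult_def vec_eq_iff sum_subtractf algebra_simps)

lemma matrix_diff_rdistrib: "((A::real^'n^'m) - B) ** C = A ** C - B ** C"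
  by (simp add: matrix_matrix_mult_def vec_eq_iff sum_subtractf algebra_simps)

lemma matrix_add_rdistrib: "((A::real^'n^'m) + B) ** C = A ** C + B ** C"
  by (simp add: matrix_matrix_mult_def vec_eq_iff sum.distrib algebra_simps)

lemma transpose_diff: "transpose ((A::real^'n^'m) - B) = transpose A - transpose B"
  by (simp add: transpose_def vec_eq_iff)

lemma transpose_add: "transpose ((A::real^'n^'m) + B) = transpose A + transpose B"
  by (simp add: transpose_def vec_eq_iff)

lemma inner_matrix_vector_transpose: "(u::real^'n) \<bullet> (A *v v) = (transpose A *v u) \<bullet> v"
  by (metis dot_lmul_matrix transpose_matrix_vector transpose_transpose)

lemma inner_matrix_vector_symmetric: "transpose A = A \<Longrightarrow> (u::real^'n) \<bullet> (A *v v) = (A *v u) \<bullet> v"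
  by (metis inner_matrix_vector_transpose)

lemma matrix_entry_inner_axis: "(A::real^'n^'m) $ i $ j = axis i 1 \<bullet> (A *v axis j 1)"
  by (simp add: matrix_vector_mult_def inner_vec_def axis_def if_distrib if_distribR cong: if_cong)

subsection \<open>The Moore--Penrose pseudoinverse of a symmetric matrix\<close>

lemma penrose_inverse_unique:
  fixes K :: "real^'m^'n"
  assumes "K ** X ** K = K" "X ** K ** X = X" "transpose (K ** X) = K ** X" "transpose (X ** K) = X ** K"
      and "K ** Y ** K = K" "Y ** K ** Y = Y" "transpose (K ** Y) = K ** Y" "transpose (Y ** K) = Y ** K"
  shows "X = Y"
proof -
  have "X = X ** (K ** X)" using assms(2) by (simp add: matrix_mul_assoc)
  also have "\<dots> = X ** transpose (K ** X)" using assms(3) by simp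
  also have "\<dots> = X ** transpose X ** transpose (K ** Y ** K)" using assms(5)
    by (simp add: matrix_transpose_mul matrix_mul_assoc)
  also have "\<dots> = X ** (transpose (K ** X) ** transpose (K ** Y))"
    by (simp add: matrix_transpose_mul matrix_mul_assoc)
  also have "\<dots> = X ** (K ** X ** (K ** Y))" using assms(3,7) by simp
  also have "\<dots> = X ** K ** Y" using assms(1) by (simp add: matrix_mul_assoc)
  finally have XKY: "X = X ** K ** Y" .
  have "Y = (Y ** K) ** Y" using assms(6) by (simp add: matrix_mul_assoc)
  also have "\<dots> = transpose (Y ** K) ** Y" using assms(8) by simp
  also have "\<dots> = transpose (K ** X ** K) ** transpose Y ** Y" using assms(1)
    by (simp add: matrix_transpose_mul matrix_mul_assoc)
  also have "\<dots> = (transpose (X ** K) ** transpose (Y ** K)) ** Y"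
    by (simp add: matrix_transpose_mul matrix_mul_assoc)
  also have "\<dots> = X ** K ** (Y ** K ** Y)" using assms(4,8) by (simp add: matrix_mul_assoc)
  also have "\<dots> = X ** K ** Y" using assms(6) by simp
  finally show ?thesis using XKY by simp
qed

lemma orthogonal_projection_matrix_exists:
  fixes S :: "(real^'n) set"
  assumes "subspace S"
  obtains P :: "real^'n^'n"
  where "transpose P = P" "\<And>v. P *v v \<in> S" "\<And>v. v \<in> S \<Longrightarrow> P *v v = v"
proof -
  obtain Bs where Bs: "Bs \<subseteq> S" "pairwise orthogonal Bs" "\<And>x. x \<in> Bs \<Longrightarrow> norm x = 1"
     "independent Bs" "span Bs = S"
    by (rule orthonormal_basis_subspace[OF assms]) blast
  have fin: "finite Bs" using Bs(4) independent_imp_finite by blast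
  define P :: "real^'n^'n" where "P = (\<chi> i j. \<Sum>b\<in>Bs. b$i * b$j)"
  have P_mv: "P *v v = (\<Sum>b\<in>Bs. (v \<bullet> b) *\<^sub>R b)" for v
    unfolding P_def
    apply (simp add: vec_eq_iff matrix_vector_mult_def inner_vec_def sum_distrib_left
        sum_distrib_right sum_component)
    apply (subst sum.swap)
    apply (simp add: mult_ac)
    done
  show thesis
  proof
    show "transpose P = P" unfolding P_def by (simp add: transpose_def vec_eq_iff mult.commute)
    show "P *v v \<in> S" for v
      unfolding P_mv Bs(5)[symmetric] by (simp add: span_sum span_mul span_base span_scale)
    show "v \<in> S \<Longrightarrow> P *v v = v" for v
      unfolding P_mv using orthonormal_basis_expand[OF Bs(2) Bs(3) _ fin] Bs(5) by auto
  qed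
qed

text \<open>With \<open>P\<close> the orthogonal projection onto the range of \<open>K\<close>, the matrix \<open>F = K + (I - P)\<close>
  is invertible and commutes with \<open>P\<close>; then \<open>F\<^sup>-\<^sup>1 P\<close> is the pseudoinverse of \<open>K\<close>.\<close>

lemma symmetric_penrose_inverse_exists:
  fixes K :: "real^'m^'m"
  assumes Ks: "transpose K = K"
  obtains X where "K ** X ** K = K" "X ** K ** X = X" "transpose (K ** X) = K ** X"
    "transpose (X ** K) = X ** K" "transpose X = X"
proof -
  define S where "S = range ((*v) K)"
  have "subspace S" unfolding S_def by (rule linear_subspace_image) auto
  then obtain P :: "real^'m^'m" where Ps: "transpose P = P" and P_in: "\<And>v. P *v v \<in> S"
    and P_fix: "\<And>v. v \<in> S \<Longrightarrow> P *v v = v"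
    using orthogonal_projection_matrix_exists by blast
  have PK: "P ** K = K"
    by (simp add: matrix_eq matrix_vector_mul_assoc[symmetric] P_fix S_def)
  have KP: "K ** P = K" by (metis PK Ks Ps matrix_transpose_mul)
  have PP: "P ** P = P" by (simp add: matrix_eq matrix_vector_mul_assoc[symmetric] P_fix P_in)
  define F where "F = K + mat 1 - P"
  have FP: "F ** P = K" unfolding F_def by (simp add: matrix_diff_rdistrib matrix_add_rdistrib KP PP)
  have PF: "P ** F = K" unfolding F_def by (simp add: matrix_diff_ldistrib matrix_add_ldistrib PK PP)
  have Fs: "transpose F = F" unfolding F_def by (simp add: transpose_diff transpose_add Ks Ps)
  have F_ker: "v = 0" if "F *v v = 0" for v
  proof -
    have Kv: "K *v v = 0" using that by (metis PF matrix_vector_mul_assoc matrix_vector_mult_0_right)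
    hence "P *v v = v" using that unfolding F_def
      by (simp add: matrix_vector_mult_diff_rdistrib matrix_vector_mult_add_rdistrib)
    then obtain w where "v = K *v w" using P_in unfolding S_def by (metis rangeE)
    hence "v \<bullet> v = w \<bullet> (K *v v)" using inner_matrix_vector_symmetric[OF Ks] by (metis inner_commute)
    thus ?thesis using Kv by simp
  qed
  obtain G where GF: "G ** F = mat 1" using F_ker matrix_left_invertible_ker by blast
  hence FG: "F ** G = mat 1" using matrix_left_right_inverse by blast
  have PG: "P ** G = G ** P"
  proof -
    have "P ** G = (G ** F) ** P ** G" using GF by simp
    also have "\<dots> = (G ** P) ** (F ** G)" by (metis FP PF matrix_mul_assoc)
    finally show ?thesis using FG by simp
  qed
  have Gs: "transpose G = G"
    by (metis FG Fs GF matrix_mul_assoc matrix_mul_lid matrix_mul_rid matrix_transpose_mul transpose_mat)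
  have KGP: "K ** (G ** P) = P" by (metis PF FG matrix_mul_assoc matrix_mul_lid PP)
  have GPK: "G ** P ** K = P" by (metis FP GF matrix_mul_assoc matrix_mul_lid PK)
  show thesis
  proof
    show "K ** (G ** P) ** K = K" using KGP PK by simp
    show "G ** P ** K ** (G ** P) = G ** P" using GPK PG PP by (metis matrix_mul_assoc)
    show "transpose (K ** (G ** P)) = K ** (G ** P)" using KGP Ps by simp
    show "transpose (G ** P ** K) = G ** P ** K" using GPK Ps by simp
    show "transpose (G ** P) = G ** P" by (simp add: matrix_transpose_mul Ps Gs PG)
  qed
qed

lemma pinv_symmetric:
  fixes K :: "real^'m^'m"
  assumes "transpose K = K"
  shows "K ** pinv K ** K = K" "pinv K ** K ** pinv K = pinv K" "transpose (pinv K) = pinv K"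
proof -
  obtain X where X: "K ** X ** K = K" "X ** K ** X = X" "transpose (K ** X) = K ** X"
    "transpose (X ** K) = X ** K" "transpose X = X"
    using symmetric_penrose_inverse_exists[OF assms] by blast
  have "pinv K = X" unfolding pinv_def
    by (rule the_equality) (use X penrose_inverse_unique in blast)+
  thus "K ** pinv K ** K = K" "pinv K ** K ** pinv K = pinv K" "transpose (pinv K) = pinv K"
    using X by simp_all
qed

lemma inner_generalized_inverse_left:
  fixes K X :: "real^'m^'m"
  assumes "X ** K ** X = X" "transpose X = X"
  shows "y \<bullet> (X *v y) = (X *v y) \<bullet> (K *v (X *v y))"
proof -
  have "X *v y = X *v (K *v (X *v y))"
    using assms(1) by (simp add: matrix_vector_mul_assoc matrix_mul_assoc)
  thus ?thesis by (metis assms(2) inner_matrix_vector_symmetric)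
qed

lemma inner_generalized_inverse_right:
  fixes K X :: "real^'m^'m"
  assumes "K ** X ** K = K" "transpose K = K"
  shows "(K *v a) \<bullet> (X *v (K *v a)) = a \<bullet> (K *v a)"
proof -
  have "(K *v a) \<bullet> (X *v (K *v a)) = a \<bullet> ((K ** X ** K) *v a)"
    by (simp add: inner_matrix_vector_symmetric[OF assms(2), symmetric] matrix_vector_mul_assoc
        matrix_mul_assoc)
  thus ?thesis using assms(1) by simp
qed

lemma loewner_le_iff: "loewner_le A B \<longleftrightarrow> (\<forall>v. v \<bullet> (A *v v) \<le> v \<bullet> (B *v v))"
  by (simp add: loewner_le_def matrix_vector_mult_diff_rdistrib inner_diff_right)

lemma loewner_le_trans [trans]: "loewner_le A B \<Longrightarrow> loewner_le B C \<Longrightarrow> loewner_le A C"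
  unfolding loewner_le_iff by (meson order_trans)

lemma loewner_le_0_scaleR_mat1: "0 \<le> c \<Longrightarrow> loewner_le 0 (c *\<^sub>R mat 1)"
  unfolding loewner_le_iff by (simp add: scaleR_matrix_vector_assoc[symmetric])

lemma loewner_le_scaleR_left:
  "0 \<le> c \<Longrightarrow> loewner_le A B \<Longrightarrow> loewner_le (c *\<^sub>R A) (c *\<^sub>R B)"
  unfolding loewner_le_iff by (simp add: scaleR_matrix_vector_assoc[symmetric] mult_left_mono)

lemma loewner_le_scaleR_right:
  "a \<le> b \<Longrightarrow> loewner_le 0 A \<Longrightarrow> loewner_le (a *\<^sub>R A) (b *\<^sub>R A)"
  unfolding loewner_le_iff by (simp add: scaleR_matrix_vector_assoc[symmetric] mult_right_mono)

lemma trace_scaleR: "trace (c *\<^sub>R (A::real^'n^'n)) = c * trace A"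
  by (simp add: trace_def sum_distrib_left)

lemma trace_eq_sum_axis: "trace (A::real^'n^'n) = (\<Sum>i\<in>UNIV. axis i 1 \<bullet> (A *v axis i 1))"
  unfolding trace_def using matrix_entry_inner_axis by metis

lemma trace_mono_loewner: "loewner_le A B \<Longrightarrow> trace A \<le> trace B"
  unfolding loewner_le_iff trace_eq_sum_axis by (simp add: sum_mono)

lemma trace_pos_loewner:
  assumes "0 < \<mu>" "loewner_le (\<mu> *\<^sub>R mat 1) (A::real^'n^'n)"
  shows "0 < trace A"
proof -
  have "0 < trace (\<mu> *\<^sub>R mat 1 :: real^'n^'n)" using assms(1) by (simp add: trace_scaleR trace_I)
  also have "\<dots> \<le> trace A" using assms(2) by (rule trace_mono_loewner)
  finally show ?thesis .
qed

lemma sum_compl_top_le: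
  fixes r :: "'n::finite \<Rightarrow> real" and idx :: "'k::finite \<Rightarrow> 'n"
  assumes inj: "inj idx" and top: "\<And>i j. i \<in> range idx \<Longrightarrow> j \<notin> range idx \<Longrightarrow> r j \<le> r i"
  shows "(\<Sum>j\<in>-range idx. r j) \<le> (1 - real CARD('k) / real CARD('n)) * (\<Sum>j\<in>UNIV. r j)"
proof -
  let ?S = "range idx"
  have cS: "card ?S = CARD('k)" using card_image[OF inj] by simp
  have cC: "card (-?S) = CARD('n) - CARD('k)"
    using card_Diff_subset[of ?S UNIV] cS by (simp add: Compl_eq_Diff_UNIV)
  have kn: "CARD('k) \<le> CARD('n)" using cS card_mono[of UNIV ?S] by (metis finite subset_UNIV)
  define a where "a = (\<Sum>j\<in>?S. r j)"
  define b where "b = (\<Sum>j\<in>-?S. r j)"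
  have tot: "(\<Sum>j\<in>UNIV. r j) = a + b" unfolding a_def b_def
    using sum.subset_diff[of ?S UNIV r] by (simp add: Compl_eq_Diff_UNIV)
  have "(\<Sum>j\<in>-?S. \<Sum>i\<in>?S. r j) \<le> (\<Sum>j\<in>-?S. \<Sum>i\<in>?S. r i)"
    by (intro sum_mono) (use top in auto)
  hence "real CARD('k) * b \<le> (real CARD('n) - real CARD('k)) * a"
    using kn by (simp add: a_def b_def cS cC sum_distrib_left mult.commute of_nat_diff)
  hence "real CARD('n) * b \<le> (real CARD('n) - real CARD('k)) * (a + b)" by (simp add: algebra_simps)
  thus ?thesis unfolding tot b_def[symmetric] by (simp add: field_simps)
qed

subsection \<open>The SR-k correction term\<close>

definition sr_correction :: "real^'n^'n \<Rightarrow> real^'k^'n \<Rightarrow> real^'n^'n" where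
  "sr_correction R U = R ** U ** pinv (transpose U ** R ** U) ** transpose U ** R"

lemma sr_k_eq_sr_correction: "sr_k G A U = G - sr_correction (G - A) U"
proof (cases "G ** U = A ** U")
  case True
  hence "(G - A) ** U = 0" by (simp add: matrix_diff_rdistrib)
  thus ?thesis using True by (simp add: sr_k_def sr_correction_def)
qed (simp add: sr_k_def sr_correction_def)

lemma inner_compression:
  fixes U :: "real^'k^'n" and R :: "real^'n^'n"
  shows "u \<bullet> ((transpose U ** R ** U) *v u) = (U *v u) \<bullet> (R *v (U *v u))"
proof -
  have "u \<bullet> ((transpose U ** R ** U) *v u) = u \<bullet> (transpose U *v (R *v (U *v u)))"
    by (simp only: matrix_vector_mul_assoc matrix_mul_assoc)
  also have "\<dots> = (U *v u) \<bullet> (R *v (U *v u))"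
    by (simp only: inner_matrix_vector_transpose[of u "transpose U"] transpose_transpose)
  finally show ?thesis .
qed

context
  fixes R :: "real^'n^'n"
  assumes R_sym: "transpose R = R" and R_psd: "\<And>v. 0 \<le> v \<bullet> (R *v v)"
begin

lemma compression_symmetric: "transpose (transpose U ** R ** U) = transpose U ** R ** U"
  by (simp add: matrix_transpose_mul R_sym matrix_mul_assoc)

lemmas pinv_compression = pinv_symmetric[OF compression_symmetric]

lemma inner_sr_correction:
  "v \<bullet> (sr_correction R U *v v)
    = (transpose U *v (R *v v)) \<bullet> (pinv (transpose U ** R ** U) *v (transpose U *v (R *v v)))"
proof -
  let ?X = "pinv (transpose U ** R ** U)" and ?y = "transpose U *v (R *v v)"
  have "v \<bullet> (sr_correction R U *v v) = v \<bullet> (R *v (U *v (?X *v ?y)))"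
    unfolding sr_correction_def by (simp only: matrix_vector_mul_assoc matrix_mul_assoc)
  also have "\<dots> = (R *v v) \<bullet> (U *v (?X *v ?y))"
    by (rule inner_matrix_vector_symmetric[OF R_sym])
  also have "\<dots> = ?y \<bullet> (?X *v ?y)"
    by (rule inner_matrix_vector_transpose)
  finally show ?thesis .
qed

lemma sr_correction_diag_nonneg: "0 \<le> sr_correction R U $ i $ i"
  unfolding matrix_entry_inner_axis inner_sr_correction
    inner_generalized_inverse_left[OF pinv_compression(2,3)] inner_compression
  by (rule R_psd)

text \<open>Schur complement: for \<open>z = (U\<^sup>T R U)\<^sup>\<dagger> U\<^sup>T R v\<close>, expanding \<open>0 \<le> (v - U z)\<^sup>T R (v - U z)\<close>
  leaves exactly \<open>v\<^sup>T R v - v\<^sup>T N v\<close> for the correction \<open>N\<close>.\<close>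

lemma sr_correction_le: "loewner_le (sr_correction R U) R"
  unfolding loewner_le_iff
proof
  fix v
  define y where "y = transpose U *v (R *v v)"
  define z where "z = pinv (transpose U ** R ** U) *v y"
  have cross: "v \<bullet> (R *v (U *v z)) = y \<bullet> z"
    unfolding y_def using inner_matrix_vector_symmetric[OF R_sym] inner_matrix_vector_transpose by metis
  have cross': "(U *v z) \<bullet> (R *v v) = y \<bullet> z"
    using cross inner_matrix_vector_symmetric[OF R_sym] by (metis inner_commute)
  have square: "(U *v z) \<bullet> (R *v (U *v z)) = y \<bullet> z"
    using inner_generalized_inverse_left[OF pinv_compression(2,3), of y]
    unfolding z_def inner_compression by simp
  have "(v - U *v z) \<bullet> (R *v (v - U *v z)) = v \<bullet> (R *v v) - y \<bullet> z"
    using cross cross' square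
    by (simp add: matrix_vector_mult_diff_distrib inner_diff_left inner_diff_right)
  moreover have "v \<bullet> (sr_correction R U *v v) = y \<bullet> z"
    unfolding inner_sr_correction y_def z_def ..
  ultimately show "v \<bullet> (sr_correction R U *v v) \<le> v \<bullet> (R *v v)"
    using R_psd[of "v - U *v z"] by simp
qed

lemma sr_correction_diag_selected:
  assumes Ul: "U *v axis l 1 = axis i 1"
  shows "sr_correction R U $ i $ i = R $ i $ i"
proof -
  let ?K = "transpose U ** R ** U"
  have y: "transpose U *v (R *v axis i 1) = ?K *v axis l 1"
    unfolding Ul[symmetric] by (simp only: matrix_vector_mul_assoc matrix_mul_assoc)
  have "sr_correction R U $ i $ i = (?K *v axis l 1) \<bullet> (pinv ?K *v (?K *v axis l 1))"
    unfolding matrix_entry_inner_axis inner_sr_correction y ..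
  also have "\<dots> = axis l 1 \<bullet> (?K *v axis l 1)"
    by (rule inner_generalized_inverse_right[OF pinv_compression(1) compression_symmetric])
  also have "\<dots> = R $ i $ i"
    unfolding inner_compression Ul by (simp add: matrix_entry_inner_axis)
  finally show ?thesis .
qed

end


lemma selection_matrix_axis:
  fixes idx :: "'k::finite \<Rightarrow> 'n::finite"
  shows "(\<chi> j l. if j = idx l then 1 else 0 :: real^'k^'n) *v axis l 1 = axis (idx l) 1"
  unfolding matrix_vector_mult_basis by (simp add: column_def axis_def vec_eq_iff)

context
  fixes G A :: "real^'n^'n"
  assumes G_sym: "transpose G = G" and A_sym: "transpose A = A" and AG: "loewner_le A G"
begin

lemma residual_symmetric: "transpose (G - A) = G - A"
  by (simp add: transpose_diff G_sym A_sym)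

lemma residual_psd: "0 \<le> v \<bullet> ((G - A) *v v)"
  using AG unfolding loewner_le_def by blast

lemma loewner_le_sr_k: "loewner_le A (sr_k G A U)"
  unfolding loewner_le_iff
proof
  fix v
  have "v \<bullet> (sr_correction (G - A) U *v v) \<le> v \<bullet> ((G - A) *v v)"
    using sr_correction_le[OF residual_symmetric residual_psd] unfolding loewner_le_iff by blast
  thus "v \<bullet> (A *v v) \<le> v \<bullet> (sr_k G A U *v v)"
    unfolding sr_k_eq_sr_correction by (simp add: matrix_vector_mult_diff_rdistrib inner_diff_right)
qed

lemma trace_sr_k_le:
  fixes U :: "real^'k^'n"
  assumes E: "is_Ek (G - A) U"
  shows "trace (sr_k G A U - A) \<le> (1 - real CARD('k) / real CARD('n)) * trace (G - A)"
proof -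
  obtain idx :: "'k \<Rightarrow> 'n" where inj: "inj idx"
    and top: "\<And>i j. i \<in> range idx \<Longrightarrow> j \<notin> range idx \<Longrightarrow> (G - A)$j$j \<le> (G - A)$i$i"
    and U: "U = (\<chi> j l. if j = idx l then 1 else 0)"
    using E unfolding is_Ek_def by blast
  define R where "R = G - A"
  define N where "N = sr_correction R U"
  have selected: "N$i$i = R$i$i" if "i \<in> range idx" for i
    using that sr_correction_diag_selected[OF residual_symmetric residual_psd]
      selection_matrix_axis unfolding N_def R_def U by blast
  have "trace (sr_k G A U - A) = (\<Sum>i\<in>UNIV. R$i$i - N$i$i)"
    unfolding sr_k_eq_sr_correction trace_def R_def N_def by (simp add: algebra_simps)
  also have "\<dots> = (\<Sum>i\<in>-range idx. R$i$i - N$i$i) + (\<Sum>i\<in>range idx. R$i$i - N$i$i)"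
    using sum.subset_diff[of "range idx" UNIV "\<lambda>i. R$i$i - N$i$i"] by (simp add: Compl_eq_Diff_UNIV)
  also have "\<dots> = (\<Sum>i\<in>-range idx. R$i$i - N$i$i)" using selected by simp
  also have "\<dots> \<le> (\<Sum>i\<in>-range idx. R$i$i)"
    using sr_correction_diag_nonneg[OF residual_symmetric residual_psd]
    unfolding N_def R_def by (intro sum_mono) simp
  also have "\<dots> \<le> (1 - real CARD('k) / real CARD('n)) * (\<Sum>i\<in>UNIV. R$i$i)"
    by (rule sum_compl_top_le[OF inj]) (use top R_def in blast)
  finally show ?thesis unfolding R_def trace_def .
qed

end

subsection \<open>The scalar estimate\<close>

lemma one_plus_half_pow4_mult_le:
  fixes s :: real
  assumes "-1 < s"
  shows "(1 + s / 2) ^ 4 * (1 - 2 * s) \<le> 1"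
proof -
  define u where "u = s / 2 + 1 / 2"
  have "0 \<le> u" using assms unfolding u_def by simp
  hence "0 \<le> 4 * u ^ 3 + 9 * u ^ 2 + 8 * u + 13 / 4" by (simp add: add_nonneg_nonneg)
  hence "0 \<le> (s / 2) ^ 2 * (4 * u ^ 3 + 9 * u ^ 2 + 8 * u + 13 / 4)" by simp
  moreover have "1 - (1 + s / 2) ^ 4 * (1 - 2 * s) = (s / 2) ^ 2 * (4 * u ^ 3 + 9 * u ^ 2 + 8 * u + 13 / 4)"
    unfolding u_def by (simp add: field_simps power2_eq_square power3_eq_cube power4_eq_xxxx)
  ultimately show ?thesis by linarith
qed

lemma one_plus_le_one_plus_half_sq: "1 + s \<le> (1 + s / 2)\<^sup>2" for s :: real
  by (simp add: power2_eq_square algebra_simps)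

lemma trace_ratio_bound:
  fixes s t0 tp tB :: real
  assumes t0: "0 < t0" and tp: "0 < tp" and t0_tp: "t0 \<le> (1 + s) * tp" and t0_tB: "t0 \<le> tB"
  shows "((1 + s / 2)\<^sup>2 * tB - tp) / tp \<le> (1 + s / 2) ^ 4 * ((tB - t0) / t0 + 2 * s)"
proof -
  define c where "c = 1 + s / 2"
  have s: "-1 < s" using t0 tp t0_tp by (smt (verit) mult_nonpos_nonneg)
  have c2: "1 + s \<le> c\<^sup>2" unfolding c_def by (rule one_plus_le_one_plus_half_sq)
  have tB: "0 \<le> c\<^sup>2 * tB" using t0 t0_tB by simp
  have "(c\<^sup>2 * tB - tp) / tp = c\<^sup>2 * tB * (1 / tp) - 1" using tp by (simp add: field_simps)
  also have "\<dots> \<le> c\<^sup>2 * tB * ((1 + s) / t0) - 1"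
    using t0 tp t0_tp tB by (intro diff_right_mono mult_left_mono) (simp_all add: field_simps)
  also have "\<dots> \<le> c\<^sup>2 * tB * (c\<^sup>2 / t0) - 1"
    using t0 tB c2 by (intro diff_right_mono mult_left_mono divide_right_mono) simp_all
  also have "\<dots> = c ^ 4 * (tB / t0) - 1" by (simp add: power4_eq_xxxx power2_eq_square)
  also have "\<dots> \<le> c ^ 4 * ((tB - t0) / t0 + 2 * s)"
    using one_plus_half_pow4_mult_le[OF s] t0 unfolding c_def by (simp add: diff_divide_distrib algebra_simps)
  finally show ?thesis unfolding c_def .
qed

subsection \<open>Hessian estimates from strong self-concordance\<close>

lemma mnorm_commute: "mnorm (x - y) A = mnorm (y - x) A"
proof -
  have "x - y = (-1::real) *\<^sub>R (y - x)" by simp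
  thus ?thesis unfolding mnorm_def by (simp only: matrix_vector_mult_scaleR inner_scaleR_left inner_scaleR_right) simp
qed

lemma strongly_self_concordant_hessian_le:
  assumes "strongly_self_concordant M H"
  shows "loewner_le (H y) ((1 + M * mnorm (y - x) (H x)) *\<^sub>R H x)"
proof -
  have "loewner_le (H y - H x) ((M * mnorm (y - x) (H x)) *\<^sub>R H x)"
    using assms unfolding strongly_self_concordant_def by blast
  thus ?thesis unfolding loewner_le_iff
    by (simp add: matrix_vector_mult_diff_rdistrib scaleR_matrix_vector_assoc[symmetric]
        inner_diff_right algebra_simps)
qed

lemma strongly_self_concordant_hessian_ge:
  assumes "strongly_self_concordant M H"
  shows "loewner_le (H x) ((1 + M * mnorm (y - x) (H x)) *\<^sub>R H y)"
proof -
  have "loewner_le (H x - H y) ((M * mnorm (y - x) (H x)) *\<^sub>R H y)"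
    using assms mnorm_commute unfolding strongly_self_concordant_def by metis
  thus ?thesis unfolding loewner_le_iff
    by (simp add: matrix_vector_mult_diff_rdistrib scaleR_matrix_vector_assoc[symmetric]
        inner_diff_right algebra_simps)
qed

lemma strongly_self_concordant_hessian_le_scaled:
  assumes ssc: "strongly_self_concordant M H"
    and Hx: "loewner_le 0 (H x)" and BH: "loewner_le (H x) B"
  shows "loewner_le (H y) ((1 + M * mnorm (y - x) (H x) / 2)\<^sup>2 *\<^sub>R B)"
proof -
  let ?s = "M * mnorm (y - x) (H x)"
  have "loewner_le (H y) ((1 + ?s) *\<^sub>R H x)"
    by (rule strongly_self_concordant_hessian_le[OF ssc])
  also have "loewner_le \<dots> ((1 + ?s / 2)\<^sup>2 *\<^sub>R H x)"
    using Hx one_plus_le_one_plus_half_sq by (rule loewner_le_scaleR_right[rotated])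
  also have "loewner_le \<dots> ((1 + ?s / 2)\<^sup>2 *\<^sub>R B)"
    using BH by (simp add: loewner_le_scaleR_left)
  finally show ?thesis .
qed

lemma strongly_self_concordant_trace_ratio_le:
  assumes ssc: "strongly_self_concordant M H" and BH: "loewner_le (H x) B"
    and tx: "0 < trace (H x)" and ty: "0 < trace (H y)"
  shows "trace ((1 + M * mnorm (y - x) (H x) / 2)\<^sup>2 *\<^sub>R B - H y) / trace (H y)
    \<le> (1 + M * mnorm (y - x) (H x) / 2) ^ 4
       * (trace (B - H x) / trace (H x) + 2 * M * mnorm (y - x) (H x))"
proof -
  have "trace (H x) \<le> (1 + M * mnorm (y - x) (H x)) * trace (H y)"
    using trace_mono_loewner[OF strongly_self_concordant_hessian_ge[OF ssc]] by (simp add: trace_scaleR)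
  thus ?thesis
    using trace_ratio_bound[OF tx ty _ trace_mono_loewner[OF BH]]
    by (simp add: trace_sub trace_scaleR mult.assoc)
qed

theorem mainTheorem3:
  fixes f :: "real^'n \<Rightarrow> real" and g :: "real^'n \<Rightarrow> real^'n"
    and H :: "real^'n \<Rightarrow> real^'n^'n"
    and \<mu> L M :: real and x xp :: "real^'n" and B :: "real^'n^'n" and U :: "real^'k^'n"
  assumes grad: "\<And>y. (f has_derivative (\<lambda>h. g y \<bullet> h)) (at y)"
    and hess: "\<And>y. (g has_derivative (\<lambda>h. H y *v h)) (at y)"
    and Hsym: "\<And>y. symmetric_mat (H y)"
    and mu_pos: "0 < \<mu>"
    and lower: "\<And>y. loewner_le (\<mu> *\<^sub>R mat 1) (H y)"
    and upper: "\<And>y. loewner_le (H y) (L *\<^sub>R mat 1)"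
    and ssc: "strongly_self_concordant M H"
    and kd: "CARD('k) < CARD('n)"
    and Bsym: "symmetric_mat B"
    and BH: "loewner_le (H x) B"
    and U: "is_Ek (((1 + M * mnorm (xp - x) (H x) / 2)\<^sup>2 *\<^sub>R B) - H xp) U"
  shows "loewner_le (H xp) (sr_k ((1 + M * mnorm (xp - x) (H x) / 2)\<^sup>2 *\<^sub>R B) (H xp) U)
    \<and> trace (sr_k ((1 + M * mnorm (xp - x) (H x) / 2)\<^sup>2 *\<^sub>R B) (H xp) U - H xp) / trace (H xp)
      \<le> (1 - real CARD('k) / real CARD('n)) * (1 + M * mnorm (xp - x) (H x) / 2) ^ 4
         * (trace (B - H x) / trace (H x) + 2 * M * mnorm (xp - x) (H x))"
proof -
  let ?P = "(1 + M * mnorm (xp - x) (H x) / 2)\<^sup>2 *\<^sub>R B"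
  define q where "q = 1 - real CARD('k) / real CARD('n)"
  have "loewner_le 0 (H x)"
    using loewner_le_0_scaleR_mat1 lower mu_pos loewner_le_trans by (metis less_imp_le)
  hence HP: "loewner_le (H xp) ?P"
    using strongly_self_concordant_hessian_le_scaled[OF ssc _ BH] by blast
  have sym: "transpose ?P = ?P" "transpose (H xp) = H xp"
    using Bsym Hsym by (simp_all add: symmetric_mat_def transpose_scalar)
  have tx: "0 < trace (H x)" and txp: "0 < trace (H xp)"
    using trace_pos_loewner[OF mu_pos lower] by blast+
  have "trace (sr_k ?P (H xp) U - H xp) / trace (H xp) \<le> q * (trace (?P - H xp) / trace (H xp))"
    using divide_right_mono[OF trace_sr_k_le[OF sym HP U]] txp unfolding q_def by simp
  also have "\<dots> \<le> q * ((1 + M * mnorm (xp - x) (H x) / 2) ^ 4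
      * (trace (B - H x) / trace (H x) + 2 * M * mnorm (xp - x) (H x)))"
    using strongly_self_concordant_trace_ratio_le[OF ssc BH tx txp] kd unfolding q_def
    by (intro mult_left_mono) simp_all
  finally show ?thesis
    using loewner_le_sr_k[OF sym HP] unfolding q_def by (simp add: mult.assoc)
qed

end
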